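(* Let $F$ be an algebraically closed field and $R$ an $F$-algebra. Let $\sigma$ be an $F$-algebra automorphism of $R$ and $\delta$ a $\sigma$-derivation of $R$, and set $T=R[x;\sigma,\delta]$. Let $\Xi(T)$ (resp. $\Xi(R)$) be the set of ideals $M$ of $T$ (resp. of $R$) with $T/M\cong F$ (resp. $R/M\cong F$), and let $\Psi:\Xi(T)\to\Xi(R)$, $M\mapsto M\cap R$. Consider for $\mathfrak m\in\Xi(R)$ the conditions (a) $\delta([R,R])\subseteq\mathfrak m$; (b) $\sigma(\mathfrak m)=\mathfrak m$ and $\delta(\mathfrak m)\subseteq\mathfrak m$; (c) $\sigma(\mathfrak m)\neq\mathfrak m$. (i) If $M\in\Xi(T)$ and $\mathfrak m=\Psi(M)$, then (a) holds for $\mathfrak m$, and either (b) or (c) holds for $\mathfrak m$. (ii) If $\mathfrak m\in\Xi(R)$ satisfies (b) (and hence (a)), then $\mathfrak mT$ is an ideal of $T$ with $T/\mathfrak mT\cong F[x]$, so that $\Psi^{-1}(\mathfrak m)=\{\langle\mathfrak mT,x-\lambda\rangle:\lambda\in F\}\cong\mathbb A^1_F$. (iii) If $\mathfrak m\in\Xi(R)$ satisfies (a) and (c), then there is a unique $M\in\Xi(T)$ with $\Psi(M)=\mathfrak m$.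
   Context: $[R,R]$ denotes the set of commutators $ab-ba$, $a,b\in R$. A $\sigma$-derivation $\delta$ is an $F$-linear map with $\delta(ab)=\delta(a)b+\sigma(a)\delta(b)$, and $R[x;\sigma,\delta]$ is the algebra generated by $R$ and $x$ subject to $xr-\sigma(r)x=\delta(r)$ for $r\in R$. *)

theory Defs
  imports "HOL-Computational_Algebra.Polynomial"
begin

definition rhom :: "('a::ring_1 \<Rightarrow> 'b::ring_1) \<Rightarrow> bool" where
  "rhom f \<longleftrightarrow> f 1 = 1 \<and> (\<forall>a b. f (a + b) = f a + f b) \<and> (\<forall>a b. f (a * b) = f a * f b)"

definition falg :: "('f::field \<Rightarrow> 'a::ring_1) \<Rightarrow> bool" where
  "falg e \<longleftrightarrow> rhom e \<and> (\<forall>c a. e c * a = a * e c)"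

definition falg_hom :: "('f::field \<Rightarrow> 'a::ring_1) \<Rightarrow> ('f \<Rightarrow> 'b::ring_1) \<Rightarrow> ('a \<Rightarrow> 'b) \<Rightarrow> bool" where
  "falg_hom eA eB \<phi> \<longleftrightarrow> rhom \<phi> \<and> (\<forall>c. \<phi> (eA c) = eB c)"

definition falg_aut :: "('f::field \<Rightarrow> 'a::ring_1) \<Rightarrow> ('a \<Rightarrow> 'a) \<Rightarrow> bool" where
  "falg_aut e \<sigma> \<longleftrightarrow> bij \<sigma> \<and> falg_hom e e \<sigma>"

definition sigma_derivation :: "('f::field \<Rightarrow> 'a::ring_1) \<Rightarrow> ('a \<Rightarrow> 'a) \<Rightarrow> ('a \<Rightarrow> 'a) \<Rightarrow> bool" where
  "sigma_derivation e \<sigma> \<delta> \<longleftrightarrow>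
     (\<forall>a b. \<delta> (a + b) = \<delta> a + \<delta> b) \<and> (\<forall>c a. \<delta> (e c * a) = e c * \<delta> a) \<and>
     (\<forall>a b. \<delta> (a * b) = \<delta> a * b + \<sigma> a * \<delta> b)"

definition two_ideal :: "'a::ring_1 set \<Rightarrow> bool" where
  "two_ideal I \<longleftrightarrow> 0 \<in> I \<and> (\<forall>a\<in>I. \<forall>b\<in>I. a + b \<in> I) \<and> (\<forall>a\<in>I. - a \<in> I) \<and>
     (\<forall>a\<in>I. \<forall>r. r * a \<in> I \<and> a * r \<in> I)"

definition ideal_gen :: "'a::ring_1 set \<Rightarrow> 'a set" where
  "ideal_gen S = \<Inter> {I. two_ideal I \<and> S \<subseteq> I}"

(* Xi(A): ideals M of the F-algebra A with A/M \<cong> F as F-algebras,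
   i.e. M is the kernel of an F-algebra homomorphism A -> F (first isomorphism theorem;
   such a homomorphism is automatically surjective) *)
definition Xi :: "('f::field \<Rightarrow> 'a::ring_1) \<Rightarrow> 'a set set" where
  "Xi e = {M. two_ideal M \<and> (\<exists>\<phi> :: 'a \<Rightarrow> 'f. falg_hom e id \<phi> \<and> M = {a. \<phi> a = 0})}"

(* T together with the embedding iota : R -> T and the element x is the Ore extension R[x;sigma,delta]:
   iota is an injective unital ring hom, x r = sigma(r) x + delta(r), and T is a free left R-module
   with basis 1, x, x^2, ... *)
definition ore_extension :: "('r::ring_1 \<Rightarrow> 'r) \<Rightarrow> ('r \<Rightarrow> 'r) \<Rightarrow> ('r \<Rightarrow> 't::ring_1) \<Rightarrow> 't \<Rightarrow> bool" where
  "ore_extension \<sigma> \<delta> \<iota> x \<longleftrightarrow> rhom \<iota> \<and> inj \<iota> \<and>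
     (\<forall>r. x * \<iota> r = \<iota> (\<sigma> r) * x + \<iota> (\<delta> r)) \<and>
     (\<forall>t. \<exists>!c :: nat \<Rightarrow> 'r. finite {i. c i \<noteq> 0} \<and> t = (\<Sum>i\<in>{i. c i \<noteq> 0}. \<iota> (c i) * x ^ i))"

(* Psi(M) = M \<inter> R, with R identified with its image in T *)
definition Psi :: "('r \<Rightarrow> 't) \<Rightarrow> 't set \<Rightarrow> 'r set" where
  "Psi \<iota> M = \<iota> -` M"

definition ext_ideal :: "('r \<Rightarrow> 't::ring_1) \<Rightarrow> 'r set \<Rightarrow> 't set" where
  "ext_ideal \<iota> m = {t. \<exists>(n::nat) a s. (\<forall>j<n. a j \<in> m) \<and> t = (\<Sum>j<n. \<iota> (a j) * s j)}"

definition commutators :: "'a::ring_1 set" where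
  "commutators = {a * b - b * a | a b. True}"

end

theory Submission
  imports Defs
begin

text \<open>
  Every \<open>M \<in> \<Xi>(T)\<close> is the kernel of a character \<open>\<chi> : T \<rightarrow> F\<close>, and \<open>\<chi>\<close> is determined by its
  restriction \<open>\<phi> = \<chi> \<circ> \<iota>\<close>, a character of \<open>R\<close> with kernel \<open>\<Psi>(M)\<close>, together with \<open>\<lambda> = \<chi>(x)\<close>.
  Applying \<open>\<chi>\<close> to \<open>x r = \<sigma>(r) x + \<delta>(r)\<close> gives \<open>\<phi>(\<delta> r) = \<lambda> (\<phi>(r) - \<phi>(\<sigma> r))\<close>, which yields (a),
  and (b) when \<open>\<sigma>\<close> fixes \<open>ker \<phi>\<close>. Conversely, by the universal property of the Ore extension,
  \<open>\<phi>\<close> extends to a character with \<open>x \<mapsto> \<lambda>\<close> exactly when this relation holds for all \<open>r\<close>.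
  If \<open>\<sigma>(m) = m\<close> then \<open>\<phi> \<circ> \<sigma> = \<phi>\<close> and \<open>\<delta>(R) \<subseteq> m\<close>, so every \<open>\<lambda>\<close> works, with kernel
  \<open>\<langle>mT, x - \<lambda>\<rangle>\<close>; sending \<open>x\<close> to the indeterminate instead gives \<open>T/mT \<cong> F[x]\<close>.
  If \<open>\<sigma>(m) \<noteq> m\<close>, some \<open>r\<^sub>0\<close> has \<open>\<phi>(\<sigma> r\<^sub>0) \<noteq> \<phi>(r\<^sub>0)\<close>, which pins down \<open>\<lambda>\<close>; applying \<open>\<phi>\<close> to
  \<open>\<delta>(a r\<^sub>0 - r\<^sub>0 a) \<in> m\<close> shows that (a) makes the relation hold for every \<open>a\<close>.
\<close>

lemma rhom_0: "rhom f \<Longrightarrow> f 0 = 0"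
  unfolding rhom_def by (metis add_cancel_right_right add.right_neutral)

lemma rhom_add: "rhom f \<Longrightarrow> f (a + b) = f a + f b"
  unfolding rhom_def by blast

lemma rhom_mult: "rhom f \<Longrightarrow> f (a * b) = f a * f b"
  unfolding rhom_def by blast

lemma rhom_1: "rhom f \<Longrightarrow> f 1 = 1"
  unfolding rhom_def by blast

lemma rhom_neg: "rhom f \<Longrightarrow> f (- a) = - f a"
  by (metis add.right_inverse add_eq_0_iff rhom_0 rhom_add)

lemma rhom_diff: "rhom f \<Longrightarrow> f (a - b) = f a - f b"
  by (metis diff_conv_add_uminus rhom_add rhom_neg)

lemma rhom_sum: "rhom f \<Longrightarrow> f (sum g S) = (\<Sum>i\<in>S. f (g i))"
  by (induction S rule: infinite_finite_induct) (auto simp: rhom_0 rhom_add)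

lemma rhom_power: "rhom f \<Longrightarrow> f (a ^ n) = f a ^ n"
  by (induction n) (auto simp: rhom_1 rhom_mult)

lemma rhom_comp: "rhom f \<Longrightarrow> rhom g \<Longrightarrow> rhom (f \<circ> g)"
  unfolding rhom_def by auto

lemma rhom_const_poly: "rhom (\<phi> :: 'a::ring_1 \<Rightarrow> 'b::comm_ring_1) \<Longrightarrow> rhom (\<lambda>r. [:\<phi> r:])"
  unfolding rhom_def by (auto simp: pCons_one)

lemma two_ideal_add: "two_ideal J \<Longrightarrow> a \<in> J \<Longrightarrow> b \<in> J \<Longrightarrow> a + b \<in> J"
  unfolding two_ideal_def by blast

lemma two_ideal_mult_left: "two_ideal J \<Longrightarrow> a \<in> J \<Longrightarrow> r * a \<in> J"
  unfolding two_ideal_def by blast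

lemma two_ideal_mult_right: "two_ideal J \<Longrightarrow> a \<in> J \<Longrightarrow> a * r \<in> J"
  unfolding two_ideal_def by blast

lemma two_ideal_sum: "two_ideal J \<Longrightarrow> (\<And>i. i \<in> S \<Longrightarrow> g i \<in> J) \<Longrightarrow> sum g S \<in> J"
  by (induction S rule: infinite_finite_induct) (auto simp: two_ideal_def)

lemma two_ideal_power_diff:
  assumes J: "two_ideal J" and ab: "a - b \<in> J"
  shows "a ^ n - b ^ n \<in> J"
proof (induction n)
  case 0
  then show ?case using J unfolding two_ideal_def by simp
next
  case (Suc n)
  have "a ^ Suc n - b ^ Suc n = a ^ n * (a - b) + (a ^ n - b ^ n) * b"
    by (simp add: algebra_simps power_Suc2 del: power_Suc)
  then show ?case
    using Suc J ab by (metis two_ideal_add two_ideal_mult_left two_ideal_mult_right)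
qed

lemma two_ideal_ker: "rhom f \<Longrightarrow> two_ideal {a. f a = 0}"
  unfolding two_ideal_def by (auto simp: rhom_0 rhom_add rhom_neg rhom_mult)

lemma mem_ideal_gen_iff: "t \<in> ideal_gen S \<longleftrightarrow> (\<forall>J. two_ideal J \<and> S \<subseteq> J \<longrightarrow> t \<in> J)"
  unfolding ideal_gen_def by blast

lemma ext_ideal_subset_ker:
  assumes "rhom \<chi>" "\<And>a. a \<in> m \<Longrightarrow> \<chi> (\<iota> a) = 0"
  shows "ext_ideal \<iota> m \<subseteq> {t. \<chi> t = 0}"
  unfolding ext_ideal_def using assms by (auto simp: rhom_sum rhom_mult)

lemma ideal_gen_least: "two_ideal J \<Longrightarrow> S \<subseteq> J \<Longrightarrow> ideal_gen S \<subseteq> J"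
  unfolding ideal_gen_def by blast

lemma ker_in_Xi: "falg_hom e id \<phi> \<Longrightarrow> {a. \<phi> a = 0} \<in> Xi e"
  unfolding Xi_def falg_hom_def using two_ideal_ker by blast

lemma Psi_ker: "Psi \<iota> {t. \<chi> t = 0} = {a. (\<chi> \<circ> \<iota>) a = 0}"
  unfolding Psi_def by auto

lemma falg_hom_id_eqI:
  assumes "falg_hom e id \<phi>1" "falg_hom e id \<phi>2" "\<And>r. \<phi>2 r = 0 \<Longrightarrow> \<phi>1 r = 0"
  shows "\<phi>1 = \<phi>2"
proof
  fix r
  have h1: "rhom \<phi>1" "\<And>c. \<phi>1 (e c) = c" and h2: "rhom \<phi>2" "\<And>c. \<phi>2 (e c) = c"
    using assms(1,2) unfolding falg_hom_def by auto
  have "\<phi>2 (r - e (\<phi>2 r)) = 0" by (simp add: rhom_diff[OF h2(1)] h2(2))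
  then have "\<phi>1 (r - e (\<phi>2 r)) = 0" by (rule assms(3))
  then show "\<phi>1 r = \<phi>2 r" by (simp add: rhom_diff[OF h1(1)] h1(2))
qed

definition ore_coeff :: "('r::ring_1 \<Rightarrow> 't::ring_1) \<Rightarrow> 't \<Rightarrow> 't \<Rightarrow> nat \<Rightarrow> 'r" where
  "ore_coeff \<iota> x t = (THE c. finite {i. c i \<noteq> 0} \<and> t = (\<Sum>i\<in>{i. c i \<noteq> 0}. \<iota> (c i) * x ^ i))"

definition ore_eval ::
    "('r::ring_1 \<Rightarrow> 't::ring_1) \<Rightarrow> 't \<Rightarrow> ('r \<Rightarrow> 'a::comm_ring_1) \<Rightarrow> 'a \<Rightarrow> 't \<Rightarrow> 'a" where
  "ore_eval \<iota> x \<psi> y t = (\<Sum>i\<in>{i. ore_coeff \<iota> x t i \<noteq> 0}. \<psi> (ore_coeff \<iota> x t i) * y ^ i)"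

locale ore_ext =
  fixes \<sigma> \<delta> :: "'r::ring_1 \<Rightarrow> 'r" and \<iota> :: "'r \<Rightarrow> 't::ring_1" and x :: 't
  assumes ore: "ore_extension \<sigma> \<delta> \<iota> x"
begin

lemma iota_rhom: "rhom \<iota>" and x_iota: "x * \<iota> r = \<iota> (\<sigma> r) * x + \<iota> (\<delta> r)"
  using ore unfolding ore_extension_def by auto

lemma ore_coeff_spec:
  "finite {i. ore_coeff \<iota> x t i \<noteq> 0}"
  "t = (\<Sum>i\<in>{i. ore_coeff \<iota> x t i \<noteq> 0}. \<iota> (ore_coeff \<iota> x t i) * x ^ i)"
proof -
  have "\<exists>!c :: nat \<Rightarrow> 'r. finite {i. c i \<noteq> 0} \<and> t = (\<Sum>i\<in>{i. c i \<noteq> 0}. \<iota> (c i) * x ^ i)"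
    using ore unfolding ore_extension_def by blast
  from theI'[OF this] show "finite {i. ore_coeff \<iota> x t i \<noteq> 0}"
      "t = (\<Sum>i\<in>{i. ore_coeff \<iota> x t i \<noteq> 0}. \<iota> (ore_coeff \<iota> x t i) * x ^ i)"
    unfolding ore_coeff_def by blast+
qed

lemma ore_coeff_unique:
  assumes "finite {i. c i \<noteq> 0}" "t = (\<Sum>i\<in>{i. c i \<noteq> 0}. \<iota> (c i) * x ^ i)"
  shows "ore_coeff \<iota> x t = c"
proof -
  have "\<exists>!c :: nat \<Rightarrow> 'r. finite {i. c i \<noteq> 0} \<and> t = (\<Sum>i\<in>{i. c i \<noteq> 0}. \<iota> (c i) * x ^ i)"
    using ore unfolding ore_extension_def by blast
  then show ?thesis unfolding ore_coeff_def by (rule the1_equality) (use assms in auto)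
qed

lemma ore_expansion:
  "finite S \<Longrightarrow> {i. ore_coeff \<iota> x t i \<noteq> 0} \<subseteq> S \<Longrightarrow> t = (\<Sum>i\<in>S. \<iota> (ore_coeff \<iota> x t i) * x ^ i)"
  by (subst ore_coeff_spec(2)) (rule sum.mono_neutral_left, auto simp: rhom_0[OF iota_rhom])

lemma ore_expansion_lessThan:
  obtains N where "t = (\<Sum>i<N. \<iota> (ore_coeff \<iota> x t i) * x ^ i)"
    and "\<And>N'. N \<le> N' \<Longrightarrow> t = (\<Sum>i<N'. \<iota> (ore_coeff \<iota> x t i) * x ^ i)"
proof -
  obtain N where "{i. ore_coeff \<iota> x t i \<noteq> 0} \<subseteq> {..<N}"
    using ore_coeff_spec(1)[of t] finite_nat_iff_bounded by blast
  then show ?thesis by (intro that ore_expansion) auto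
qed

lemma ore_coeff_sum:
  assumes S: "finite S"
  shows "ore_coeff \<iota> x (\<Sum>i\<in>S. \<iota> (c i) * x ^ i) = (\<lambda>i. if i \<in> S then c i else 0)"
proof -
  define c' where "c' = (\<lambda>i. if i \<in> S then c i else 0)"
  have sub: "{i. c' i \<noteq> 0} \<subseteq> S" by (auto simp: c'_def split: if_splits)
  have "(\<Sum>i\<in>S. \<iota> (c i) * x ^ i) = (\<Sum>i\<in>S. \<iota> (c' i) * x ^ i)" by (simp add: c'_def)
  also have "\<dots> = (\<Sum>i\<in>{i. c' i \<noteq> 0}. \<iota> (c' i) * x ^ i)"
    by (rule sum.mono_neutral_right) (use S sub in \<open>auto simp: rhom_0[OF iota_rhom]\<close>)
  finally show ?thesis unfolding c'_def[symmetric]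
    by (intro ore_coeff_unique) (use S sub finite_subset in auto)
qed

text \<open>
  Universal property of \<open>R[x;\<sigma>,\<delta>]\<close> for commutative targets: a ring homomorphism \<open>\<psi>\<close> on \<open>R\<close>
  extends to \<open>T\<close> with \<open>x \<mapsto> y\<close> as soon as \<open>y\<close> satisfies the defining relation of \<open>x\<close>.
\<close>

context
  fixes \<psi> :: "'r \<Rightarrow> 'a::comm_ring_1" and y :: 'a
  assumes psi: "rhom \<psi>" and rel: "\<And>r. \<psi> (\<sigma> r) * y + \<psi> (\<delta> r) = y * \<psi> r"
begin

lemma ore_eval_monom_sum:
  assumes "finite S"
  shows "ore_eval \<iota> x \<psi> y (\<Sum>i\<in>S. \<iota> (c i) * x ^ i) = (\<Sum>i\<in>S. \<psi> (c i) * y ^ i)"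
proof -
  have expand: "ore_eval \<iota> x \<psi> y t = (\<Sum>i\<in>S. \<psi> (ore_coeff \<iota> x t i) * y ^ i)"
    if "{i. ore_coeff \<iota> x t i \<noteq> 0} \<subseteq> S" for t
    unfolding ore_eval_def by (rule sum.mono_neutral_left) (use assms that in \<open>auto simp: rhom_0[OF psi]\<close>)
  show ?thesis by (subst expand) (use assms in \<open>auto simp: ore_coeff_sum split: if_splits\<close>)
qed

lemma ore_eval_monom: "ore_eval \<iota> x \<psi> y (\<iota> r * x ^ n) = \<psi> r * y ^ n"
  using ore_eval_monom_sum[of "{n}" "\<lambda>_. r"] by simp

lemma ore_eval_iota: "ore_eval \<iota> x \<psi> y (\<iota> r) = \<psi> r"
  using ore_eval_monom[of r 0] by simp

lemma ore_eval_x: "ore_eval \<iota> x \<psi> y x = y"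
  using ore_eval_monom[of 1 1] by (simp add: rhom_1[OF iota_rhom] rhom_1[OF psi])

lemma ore_eval_add: "ore_eval \<iota> x \<psi> y (a + b) = ore_eval \<iota> x \<psi> y a + ore_eval \<iota> x \<psi> y b"
proof -
  obtain Na where Na: "\<And>N'. Na \<le> N' \<Longrightarrow> a = (\<Sum>i<N'. \<iota> (ore_coeff \<iota> x a i) * x ^ i)"
    using ore_expansion_lessThan by metis
  obtain Nb where Nb: "\<And>N'. Nb \<le> N' \<Longrightarrow> b = (\<Sum>i<N'. \<iota> (ore_coeff \<iota> x b i) * x ^ i)"
    using ore_expansion_lessThan by metis
  define N where "N = max Na Nb"
  have a: "a = (\<Sum>i<N. \<iota> (ore_coeff \<iota> x a i) * x ^ i)" and b: "b = (\<Sum>i<N. \<iota> (ore_coeff \<iota> x b i) * x ^ i)"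
    using Na Nb unfolding N_def by auto
  have "a + b = (\<Sum>i<N. \<iota> (ore_coeff \<iota> x a i + ore_coeff \<iota> x b i) * x ^ i)"
    by (subst a, subst b) (simp add: rhom_add[OF iota_rhom] distrib_right sum.distrib)
  then have "ore_eval \<iota> x \<psi> y (a + b) = (\<Sum>i<N. \<psi> (ore_coeff \<iota> x a i + ore_coeff \<iota> x b i) * y ^ i)"
    by (simp add: ore_eval_monom_sum)
  also have "\<dots> = (\<Sum>i<N. \<psi> (ore_coeff \<iota> x a i) * y ^ i) + (\<Sum>i<N. \<psi> (ore_coeff \<iota> x b i) * y ^ i)"
    by (simp add: rhom_add[OF psi] distrib_right sum.distrib)
  also have "\<dots> = ore_eval \<iota> x \<psi> y a + ore_eval \<iota> x \<psi> y b"
    by (metis a b finite_lessThan ore_eval_monom_sum)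
  finally show ?thesis .
qed

lemma ore_eval_0: "ore_eval \<iota> x \<psi> y 0 = 0"
  using ore_eval_add[of 0 0] by simp

lemma ore_eval_sum: "ore_eval \<iota> x \<psi> y (sum g S) = (\<Sum>i\<in>S. ore_eval \<iota> x \<psi> y (g i))"
  by (induction S rule: infinite_finite_induct) (auto simp: ore_eval_0 ore_eval_add)

lemma ore_eval_iota_mult: "ore_eval \<iota> x \<psi> y (\<iota> r * b) = \<psi> r * ore_eval \<iota> x \<psi> y b"
proof -
  obtain N where N: "b = (\<Sum>i<N. \<iota> (ore_coeff \<iota> x b i) * x ^ i)"
    using ore_expansion_lessThan by metis
  have "\<iota> r * b = (\<Sum>i<N. \<iota> (r * ore_coeff \<iota> x b i) * x ^ i)"
    by (subst N) (simp add: sum_distrib_left rhom_mult[OF iota_rhom] mult.assoc)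
  then have "ore_eval \<iota> x \<psi> y (\<iota> r * b) = (\<Sum>i<N. \<psi> (r * ore_coeff \<iota> x b i) * y ^ i)"
    by (simp add: ore_eval_monom_sum)
  also have "\<dots> = \<psi> r * (\<Sum>i<N. \<psi> (ore_coeff \<iota> x b i) * y ^ i)"
    by (simp add: sum_distrib_left rhom_mult[OF psi] mult.assoc)
  also have "\<dots> = \<psi> r * ore_eval \<iota> x \<psi> y b" by (subst (2) N) (simp add: ore_eval_monom_sum)
  finally show ?thesis .
qed

lemma ore_eval_x_mult: "ore_eval \<iota> x \<psi> y (x * b) = y * ore_eval \<iota> x \<psi> y b"
proof -
  obtain N where N: "b = (\<Sum>i<N. \<iota> (ore_coeff \<iota> x b i) * x ^ i)"
    using ore_expansion_lessThan by metis
  define k where "k = ore_coeff \<iota> x b"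
  have "x * (\<iota> c * x ^ i) = \<iota> (\<sigma> c) * x ^ Suc i + \<iota> (\<delta> c) * x ^ i" for c i
    by (simp add: mult.assoc[symmetric] x_iota distrib_right)
  then have "x * b = (\<Sum>i<N. \<iota> (\<sigma> (k i)) * x ^ Suc i + \<iota> (\<delta> (k i)) * x ^ i)"
    unfolding k_def by (subst N) (simp add: sum_distrib_left)
  then have "ore_eval \<iota> x \<psi> y (x * b) = (\<Sum>i<N. \<psi> (\<sigma> (k i)) * y ^ Suc i + \<psi> (\<delta> (k i)) * y ^ i)"
    by (simp add: ore_eval_sum ore_eval_add ore_eval_monom del: power_Suc)
  also have "\<dots> = (\<Sum>i<N. (\<psi> (\<sigma> (k i)) * y + \<psi> (\<delta> (k i))) * y ^ i)"
    by (simp add: algebra_simps)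
  also have "\<dots> = y * (\<Sum>i<N. \<psi> (k i) * y ^ i)"
    by (simp add: rel sum_distrib_left mult.assoc)
  also have "\<dots> = y * ore_eval \<iota> x \<psi> y b"
    unfolding k_def by (subst (2) N) (simp add: ore_eval_monom_sum)
  finally show ?thesis .
qed

lemma ore_eval_mult: "ore_eval \<iota> x \<psi> y (a * b) = ore_eval \<iota> x \<psi> y a * ore_eval \<iota> x \<psi> y b"
proof -
  have xpow: "ore_eval \<iota> x \<psi> y (x ^ n * b) = y ^ n * ore_eval \<iota> x \<psi> y b" for n
    by (induction n) (simp_all add: mult.assoc ore_eval_x_mult)
  obtain N where N: "a = (\<Sum>i<N. \<iota> (ore_coeff \<iota> x a i) * x ^ i)"
    using ore_expansion_lessThan by metis
  have "ore_eval \<iota> x \<psi> y (a * b) = (\<Sum>i<N. ore_eval \<iota> x \<psi> y (\<iota> (ore_coeff \<iota> x a i) * (x ^ i * b)))"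
    by (subst N) (simp add: sum_distrib_right ore_eval_sum mult.assoc)
  also have "\<dots> = (\<Sum>i<N. \<psi> (ore_coeff \<iota> x a i) * y ^ i) * ore_eval \<iota> x \<psi> y b"
    by (simp add: ore_eval_iota_mult xpow sum_distrib_right mult.assoc)
  also have "\<dots> = ore_eval \<iota> x \<psi> y a * ore_eval \<iota> x \<psi> y b"
    by (subst (2) N) (simp add: ore_eval_monom_sum)
  finally show ?thesis .
qed

lemma ore_eval_rhom: "rhom (ore_eval \<iota> x \<psi> y)"
  unfolding rhom_def using ore_eval_iota[of 1]
  by (simp add: rhom_1 iota_rhom psi ore_eval_add ore_eval_mult)

end

lemma ore_eval_unique:
  fixes \<chi> :: "'t \<Rightarrow> 'a::comm_ring_1"
  assumes "rhom \<chi>" "rhom \<psi>" "\<And>r. \<chi> (\<iota> r) = \<psi> r"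
  shows "\<chi> = ore_eval \<iota> x \<psi> (\<chi> x)"
proof
  fix t
  have "\<chi> t = (\<Sum>i\<in>{i. ore_coeff \<iota> x t i \<noteq> 0}. \<psi> (ore_coeff \<iota> x t i) * \<chi> x ^ i)"
    by (subst ore_coeff_spec(2))
      (simp add: rhom_sum[OF assms(1)] rhom_mult[OF assms(1)] rhom_power[OF assms(1)] assms(3))
  then show "\<chi> t = ore_eval \<iota> x \<psi> (\<chi> x) t" unfolding ore_eval_def .
qed

lemma rhom_iota_delta:
  fixes \<chi> :: "'t \<Rightarrow> 'a::comm_ring_1"
  assumes "rhom \<chi>"
  shows "\<chi> (\<iota> (\<delta> r)) = \<chi> x * (\<chi> (\<iota> r) - \<chi> (\<iota> (\<sigma> r)))"
proof -
  have "\<chi> x * \<chi> (\<iota> r) = \<chi> (\<iota> (\<sigma> r)) * \<chi> x + \<chi> (\<iota> (\<delta> r))"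
    using x_iota[of r] by (metis assms rhom_add rhom_mult)
  then show ?thesis by (simp add: algebra_simps)
qed

end

locale ore_falg = ore_ext \<sigma> \<delta> \<iota> x
  for \<sigma> \<delta> :: "'r::ring_1 \<Rightarrow> 'r" and \<iota> :: "'r \<Rightarrow> 't::ring_1" and x :: 't +
  fixes e :: "'f::field \<Rightarrow> 'r"
  assumes F_alg: "falg e" and aut: "falg_aut e \<sigma>" and der: "sigma_derivation e \<sigma> \<delta>"
begin

lemma e_rhom: "rhom e"
  using F_alg unfolding falg_def by auto

lemma sigma_rhom: "rhom \<sigma>" and sigma_bij: "bij \<sigma>" and sigma_e: "\<sigma> (e c) = e c"
  using aut unfolding falg_aut_def falg_hom_def by auto

lemma delta_add: "\<delta> (a + b) = \<delta> a + \<delta> b"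
  and delta_mult: "\<delta> (a * b) = \<delta> a * b + \<sigma> a * \<delta> b"
  and delta_e_mult: "\<delta> (e c * a) = e c * \<delta> a"
  using der unfolding sigma_derivation_def by auto

lemma delta_diff: "\<delta> (a - b) = \<delta> a - \<delta> b"
proof -
  have "\<delta> (- b) = - \<delta> b"
    using delta_add[of b "- b"] delta_add[of 0 0] by (simp add: eq_neg_iff_add_eq_0 add.commute)
  then show ?thesis by (metis diff_conv_add_uminus delta_add)
qed

lemma delta_e: "\<delta> (e c) = 0"
  using delta_e_mult[of c 1] delta_mult[of 1 1] by (simp add: rhom_1[OF sigma_rhom])

lemma falg_hom_comp_sigma: "falg_hom e id \<phi> \<Longrightarrow> falg_hom e id (\<phi> \<circ> \<sigma>)"
  unfolding falg_hom_def using sigma_rhom sigma_e rhom_comp by auto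

lemma sigma_ker_eq_iff:
  assumes \<phi>: "falg_hom e id \<phi>"
  shows "\<sigma> ` {a. \<phi> a = 0} = {a. \<phi> a = 0} \<longleftrightarrow> \<phi> \<circ> \<sigma> = \<phi>"
proof
  assume h: "\<sigma> ` {a. \<phi> a = 0} = {a. \<phi> a = 0}"
  show "\<phi> \<circ> \<sigma> = \<phi>"
  proof (rule sym, rule falg_hom_id_eqI[OF \<phi> falg_hom_comp_sigma[OF \<phi>]])
    fix r assume "(\<phi> \<circ> \<sigma>) r = 0"
    then have "\<sigma> r \<in> \<sigma> ` {a. \<phi> a = 0}" using h by auto
    then show "\<phi> r = 0" using bij_is_inj[OF sigma_bij] by (auto dest: injD)
  qed
next
  assume "\<phi> \<circ> \<sigma> = \<phi>"
  then have "\<phi> (\<sigma> a) = \<phi> a" for a by (metis comp_apply)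
  then show "\<sigma> ` {a. \<phi> a = 0} = {a. \<phi> a = 0}"
    using bij_is_surj[OF sigma_bij] by (auto simp: image_iff) (metis surjD)
qed

lemma falg_hom_comp_iota: "falg_hom (\<iota> \<circ> e) id \<chi> \<Longrightarrow> falg_hom e id (\<chi> \<circ> \<iota>)"
  using iota_rhom rhom_comp unfolding falg_hom_def by auto

lemma ore_eval_character:
  assumes \<phi>: "falg_hom e id \<phi>" and rel: "\<And>r. \<phi> (\<sigma> r) * y + \<phi> (\<delta> r) = y * \<phi> r"
  shows "falg_hom (\<iota> \<circ> e) id (ore_eval \<iota> x \<phi> y)"
    and "{t. ore_eval \<iota> x \<phi> y t = 0} \<in> Xi (\<iota> \<circ> e)"
    and "Psi \<iota> {t. ore_eval \<iota> x \<phi> y t = 0} = {a. \<phi> a = 0}"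
proof -
  have pr: "rhom \<phi>" and pe: "\<And>c. \<phi> (e c) = c" using \<phi> unfolding falg_hom_def by auto
  show char: "falg_hom (\<iota> \<circ> e) id (ore_eval \<iota> x \<phi> y)"
    unfolding falg_hom_def using ore_eval_rhom[OF pr rel] ore_eval_iota[OF pr rel] pe by simp
  show "{t. ore_eval \<iota> x \<phi> y t = 0} \<in> Xi (\<iota> \<circ> e)" by (rule ker_in_Xi[OF char])
  show "Psi \<iota> {t. ore_eval \<iota> x \<phi> y t = 0} = {a. \<phi> a = 0}"
    unfolding Psi_ker using ore_eval_iota[OF pr rel] by simp
qed

lemma Xi_fibre_ore_eval:
  assumes \<phi>: "falg_hom e id \<phi>" and M: "M \<in> Xi (\<iota> \<circ> e)" and PsiM: "Psi \<iota> M = {a. \<phi> a = 0}"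
  obtains \<chi> where "rhom \<chi>" "\<And>r. \<chi> (\<iota> r) = \<phi> r" "M = {t. ore_eval \<iota> x \<phi> (\<chi> x) t = 0}"
proof -
  obtain \<chi> :: "'t \<Rightarrow> 'f" where \<chi>: "falg_hom (\<iota> \<circ> e) id \<chi>" and M_ker: "M = {t. \<chi> t = 0}"
    using M unfolding Xi_def by auto
  have "\<phi> = \<chi> \<circ> \<iota>"
  proof (rule falg_hom_id_eqI[OF \<phi> falg_hom_comp_iota[OF \<chi>]])
    fix r assume "(\<chi> \<circ> \<iota>) r = 0"
    then show "\<phi> r = 0" using PsiM unfolding M_ker Psi_ker by auto
  qed
  then have \<chi>_iota: "\<chi> (\<iota> r) = \<phi> r" for r by simp
  have "rhom \<chi>" "rhom \<phi>" using \<chi> \<phi> unfolding falg_hom_def by auto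
  then have "\<chi> = ore_eval \<iota> x \<phi> (\<chi> x)" using \<chi>_iota by (rule ore_eval_unique)
  then show ?thesis using that[OF \<open>rhom \<chi>\<close> \<chi>_iota] M_ker by simp
qed

lemma Psi_Xi_conditions:
  assumes M: "M \<in> Xi (\<iota> \<circ> e)"
  shows "Psi \<iota> M \<in> Xi e \<and> \<delta> ` commutators \<subseteq> Psi \<iota> M \<and>
        ((\<sigma> ` Psi \<iota> M = Psi \<iota> M \<and> \<delta> ` Psi \<iota> M \<subseteq> Psi \<iota> M) \<or> \<sigma> ` Psi \<iota> M \<noteq> Psi \<iota> M)"
proof -
  obtain \<chi> :: "'t \<Rightarrow> 'f" where \<chi>: "falg_hom (\<iota> \<circ> e) id \<chi>" and M_ker: "M = {t. \<chi> t = 0}"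
    using M unfolding Xi_def by auto
  define \<phi> where "\<phi> = \<chi> \<circ> \<iota>"
  have \<phi>: "falg_hom e id \<phi>" unfolding \<phi>_def by (rule falg_hom_comp_iota[OF \<chi>])
  have pr: "rhom \<phi>" and psr: "rhom (\<phi> \<circ> \<sigma>)"
    using \<phi> falg_hom_comp_sigma[OF \<phi>] unfolding falg_hom_def by auto
  have PsiM: "Psi \<iota> M = {a. \<phi> a = 0}" unfolding M_ker Psi_ker \<phi>_def ..
  have "rhom \<chi>" using \<chi> unfolding falg_hom_def by simp
  then have delta: "\<phi> (\<delta> r) = \<chi> x * (\<phi> r - \<phi> (\<sigma> r))" for r
    unfolding \<phi>_def by (simp add: rhom_iota_delta)
  have "\<delta> (a * b - b * a) \<in> Psi \<iota> M" for a b
  proof -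
    have "\<phi> (a * b - b * a) = 0" by (simp add: rhom_diff[OF pr] rhom_mult[OF pr] mult.commute)
    moreover have "(\<phi> \<circ> \<sigma>) (a * b - b * a) = 0"
      by (simp only: rhom_diff[OF psr] rhom_mult[OF psr]) (simp add: mult.commute)
    ultimately show ?thesis unfolding PsiM using delta by simp
  qed
  then have a: "\<delta> ` commutators \<subseteq> Psi \<iota> M" unfolding commutators_def by auto
  have "\<delta> ` Psi \<iota> M \<subseteq> Psi \<iota> M" if "\<sigma> ` Psi \<iota> M = Psi \<iota> M"
  proof -
    have "\<phi> \<circ> \<sigma> = \<phi>" using that sigma_ker_eq_iff[OF \<phi>] unfolding PsiM by simp
    then show ?thesis unfolding PsiM using delta by (auto simp: fun_eq_iff)
  qed
  then show ?thesis using a ker_in_Xi[OF \<phi>] PsiM by auto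
qed

lemma Xi_fibre_unique:
  assumes m: "m \<in> Xi e" and a: "\<delta> ` commutators \<subseteq> m" and c: "\<sigma> ` m \<noteq> m"
  shows "\<exists>!M. M \<in> Xi (\<iota> \<circ> e) \<and> Psi \<iota> M = m"
proof -
  obtain \<phi> :: "'r \<Rightarrow> 'f" where \<phi>: "falg_hom e id \<phi>" and m_ker: "m = {a. \<phi> a = 0}"
    using m unfolding Xi_def by auto
  have pr: "rhom \<phi>" using \<phi> unfolding falg_hom_def by auto
  have "\<phi> \<circ> \<sigma> \<noteq> \<phi>" using sigma_ker_eq_iff[OF \<phi>] c unfolding m_ker by simp
  then obtain r0 where r0: "\<phi> (\<sigma> r0) \<noteq> \<phi> r0" by (metis comp_apply ext)
  define d where "d = \<phi> r0 - \<phi> (\<sigma> r0)"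
  have d0: "d \<noteq> 0" using r0 unfolding d_def by simp
  define lam where "lam = \<phi> (\<delta> r0) / d"
  have rel: "\<phi> (\<sigma> a) * lam + \<phi> (\<delta> a) = lam * \<phi> a" for a
  proof -
    have "a * r0 - r0 * a \<in> commutators" unfolding commutators_def by auto
    then have "\<phi> (\<delta> (a * r0 - r0 * a)) = 0" using a unfolding m_ker by auto
    then have "\<phi> (\<delta> a) * \<phi> r0 + \<phi> (\<sigma> a) * \<phi> (\<delta> r0) - (\<phi> (\<delta> r0) * \<phi> a + \<phi> (\<sigma> r0) * \<phi> (\<delta> a)) = 0"
      by (simp add: delta_diff delta_mult rhom_diff[OF pr] rhom_add[OF pr] rhom_mult[OF pr])
    then have "\<phi> (\<delta> a) * d = \<phi> (\<delta> r0) * (\<phi> a - \<phi> (\<sigma> a))"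
      unfolding d_def by (simp add: algebra_simps)
    then show ?thesis unfolding lam_def using d0 by (simp add: field_simps)
  qed
  let ?M = "{t. ore_eval \<iota> x \<phi> lam t = 0}"
  show ?thesis
  proof (rule ex1I[of _ ?M])
    show "?M \<in> Xi (\<iota> \<circ> e) \<and> Psi \<iota> ?M = m"
      using ore_eval_character[OF \<phi> rel] m_ker by simp
  next
    fix M assume "M \<in> Xi (\<iota> \<circ> e) \<and> Psi \<iota> M = m"
    then obtain \<chi> where \<chi>: "rhom \<chi>" "\<And>r. \<chi> (\<iota> r) = \<phi> r" and M: "M = {t. ore_eval \<iota> x \<phi> (\<chi> x) t = 0}"
      using Xi_fibre_ore_eval[OF \<phi>] m_ker by metis
    have "\<phi> (\<delta> r0) = \<chi> x * d" using rhom_iota_delta[OF \<chi>(1), of r0] unfolding \<chi>(2) d_def .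
    then have "\<chi> x = lam" unfolding lam_def using d0 by simp
    then show "M = ?M" unfolding M by simp
  qed
qed

lemma ker_invariant_character:
  assumes \<phi>: "falg_hom e id \<phi>"
    and \<sigma>m: "\<sigma> ` {a. \<phi> a = 0} = {a. \<phi> a = 0}" and \<delta>m: "\<delta> ` {a. \<phi> a = 0} \<subseteq> {a. \<phi> a = 0}"
  shows "\<phi> (\<sigma> r) = \<phi> r" and "\<phi> (\<delta> r) = 0"
proof -
  have pr: "rhom \<phi>" and pe: "\<And>c. \<phi> (e c) = c" using \<phi> unfolding falg_hom_def by auto
  show "\<phi> (\<sigma> r) = \<phi> r" using sigma_ker_eq_iff[OF \<phi>] \<sigma>m by (metis comp_apply)
  have "\<phi> (r - e (\<phi> r)) = 0" by (simp add: rhom_diff[OF pr] pe)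
  then have "\<phi> (\<delta> (r - e (\<phi> r))) = 0" using \<delta>m by auto
  then show "\<phi> (\<delta> r) = 0" by (simp add: delta_diff delta_e)
qed

lemma ker_poly_eval_eq_ext_ideal:
  assumes \<phi>: "falg_hom e id \<phi>" and \<sigma>\<phi>: "\<And>r. \<phi> (\<sigma> r) = \<phi> r" and \<delta>\<phi>: "\<And>r. \<phi> (\<delta> r) = 0"
  defines "\<Phi> \<equiv> ore_eval \<iota> x (\<lambda>r. [:\<phi> r:]) [:0, 1:]"
  shows "falg_hom (\<iota> \<circ> e) (\<lambda>c. [:c:]) \<Phi>" and "surj \<Phi>" and "ext_ideal \<iota> {a. \<phi> a = 0} = {t. \<Phi> t = 0}"
proof -
  have pr: "rhom \<phi>" and pe: "\<And>c. \<phi> (e c) = c" using \<phi> unfolding falg_hom_def by auto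
  note psi = rhom_const_poly[OF pr]
  have rel: "[:\<phi> (\<sigma> r):] * [:0, 1:] + [:\<phi> (\<delta> r):] = [:0, 1:] * [:\<phi> r:]" for r
    by (simp add: \<sigma>\<phi> \<delta>\<phi> mult.commute)
  have \<Phi>_sum: "\<Phi> (\<Sum>i\<in>S. \<iota> (k i) * x ^ i) = (\<Sum>i\<in>S. monom (\<phi> (k i)) i)" if "finite S" for S k
    unfolding \<Phi>_def using ore_eval_monom_sum[OF psi rel that] by (simp add: monom_altdef)
  have \<Phi>_rhom: "rhom \<Phi>" unfolding \<Phi>_def by (rule ore_eval_rhom[OF psi rel])
  have \<Phi>_iota: "\<Phi> (\<iota> r) = [:\<phi> r:]" for r unfolding \<Phi>_def by (rule ore_eval_iota[OF psi rel])
  show "falg_hom (\<iota> \<circ> e) (\<lambda>c. [:c:]) \<Phi>" unfolding falg_hom_def using \<Phi>_rhom \<Phi>_iota pe by simp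
  show "surj \<Phi>"
  proof (rule surjI)
    fix p :: "'f poly"
    show "\<Phi> (\<Sum>i\<le>degree p. \<iota> (e (coeff p i)) * x ^ i) = p"
      by (simp add: \<Phi>_sum pe poly_as_sum_of_monoms)
  qed
  show "ext_ideal \<iota> {a. \<phi> a = 0} = {t. \<Phi> t = 0}"
  proof
    show "ext_ideal \<iota> {a. \<phi> a = 0} \<subseteq> {t. \<Phi> t = 0}"
      by (rule ext_ideal_subset_ker[OF \<Phi>_rhom]) (simp add: \<Phi>_iota)
  next
    show "{t. \<Phi> t = 0} \<subseteq> ext_ideal \<iota> {a. \<phi> a = 0}"
    proof
      fix t assume "t \<in> {t. \<Phi> t = 0}"
      moreover obtain N where N: "t = (\<Sum>i<N. \<iota> (ore_coeff \<iota> x t i) * x ^ i)"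
        using ore_expansion_lessThan by metis
      then have "\<Phi> t = (\<Sum>i<N. monom (\<phi> (ore_coeff \<iota> x t i)) i)"
        by (metis \<Phi>_sum finite_lessThan)
      ultimately have sum0: "(\<Sum>i<N. monom (\<phi> (ore_coeff \<iota> x t i)) i) = 0" by simp
      have "\<phi> (ore_coeff \<iota> x t j) = 0" if "j < N" for j
        using arg_cong[OF sum0, of "\<lambda>p. coeff p j"] that by (simp add: coeff_sum)
      then show "t \<in> ext_ideal \<iota> {a. \<phi> a = 0}" unfolding ext_ideal_def
        by (intro CollectI exI[of _ N] exI[of _ "ore_coeff \<iota> x t"] exI[of _ "\<lambda>j. x ^ j"]) (use N in auto)
    qed
  qed
qed

lemma ore_monomial_congruence:
  assumes \<phi>: "falg_hom e id \<phi>" and J: "two_ideal J"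
    and mT: "ext_ideal \<iota> {a. \<phi> a = 0} \<subseteq> J" and xc: "x - \<iota> (e c) \<in> J"
  shows "\<iota> r * x ^ i - \<iota> (e (\<phi> r * c ^ i)) \<in> J"
proof -
  have pr: "rhom \<phi>" and pe: "\<And>c. \<phi> (e c) = c" using \<phi> unfolding falg_hom_def by auto
  define z where "z = \<iota> (e c)"
  have "\<iota> (e (\<phi> r)) * z ^ i = z ^ i * \<iota> (e (\<phi> r))"
    unfolding z_def by (metis mult.commute rhom_mult[OF iota_rhom] rhom_mult[OF e_rhom]
        rhom_power[OF iota_rhom] rhom_power[OF e_rhom])
  then have split: "\<iota> r * x ^ i - \<iota> (e (\<phi> r * c ^ i))
      = \<iota> (r - e (\<phi> r)) * x ^ i + \<iota> (e (\<phi> r)) * (x ^ i - z ^ i)"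
    unfolding z_def by (simp add: rhom_diff[OF iota_rhom] rhom_mult[OF iota_rhom] rhom_mult[OF e_rhom]
        rhom_power[OF iota_rhom] rhom_power[OF e_rhom] algebra_simps)
  have "\<iota> (r - e (\<phi> r)) * x ^ i \<in> ext_ideal \<iota> {a. \<phi> a = 0}"
    unfolding ext_ideal_def
    by (rule CollectI, rule exI[of _ 1], rule exI[of _ "\<lambda>_. r - e (\<phi> r)"], rule exI[of _ "\<lambda>_. x ^ i"])
      (simp add: rhom_diff[OF pr] pe)
  moreover have "x ^ i - z ^ i \<in> J"
    using two_ideal_power_diff[OF J] xc unfolding z_def .
  ultimately show ?thesis
    unfolding split using J mT by (metis subsetD two_ideal_add two_ideal_mult_left)
qed

lemma ker_ore_eval_eq_ideal_gen:
  assumes \<phi>: "falg_hom e id \<phi>" and \<sigma>\<phi>: "\<And>r. \<phi> (\<sigma> r) = \<phi> r" and \<delta>\<phi>: "\<And>r. \<phi> (\<delta> r) = 0"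
  shows "{t. ore_eval \<iota> x \<phi> c t = 0} = ideal_gen (ext_ideal \<iota> {a. \<phi> a = 0} \<union> {x - \<iota> (e c)})"
proof -
  have pr: "rhom \<phi>" and pe: "\<And>c. \<phi> (e c) = c" using \<phi> unfolding falg_hom_def by auto
  have rel: "\<phi> (\<sigma> r) * c + \<phi> (\<delta> r) = c * \<phi> r" for r by (simp add: \<sigma>\<phi> \<delta>\<phi> mult.commute)
  note \<chi>_rhom = ore_eval_rhom[OF pr rel] and \<chi>_iota = ore_eval_iota[OF pr rel]
  let ?\<chi> = "ore_eval \<iota> x \<phi> c"
  let ?S = "ext_ideal \<iota> {a. \<phi> a = 0} \<union> {x - \<iota> (e c)}"
  show ?thesis
  proof
    have "ext_ideal \<iota> {a. \<phi> a = 0} \<subseteq> {t. ?\<chi> t = 0}"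
      by (rule ext_ideal_subset_ker[OF \<chi>_rhom]) (simp add: \<chi>_iota)
    moreover have "?\<chi> (x - \<iota> (e c)) = 0"
      by (simp add: rhom_diff[OF \<chi>_rhom] ore_eval_x[OF pr rel] \<chi>_iota pe)
    ultimately have "?S \<subseteq> {t. ?\<chi> t = 0}" by blast
    then show "ideal_gen ?S \<subseteq> {t. ?\<chi> t = 0}"
      by (rule ideal_gen_least[OF two_ideal_ker[OF \<chi>_rhom]])
  next
    show "{t. ?\<chi> t = 0} \<subseteq> ideal_gen ?S"
    proof (intro subsetI, unfold mem_ideal_gen_iff, intro allI impI)
      fix t J assume t0: "t \<in> {t. ?\<chi> t = 0}" and "two_ideal J \<and> ?S \<subseteq> J"
      then have J: "two_ideal J" and mT: "ext_ideal \<iota> {a. \<phi> a = 0} \<subseteq> J" and xc: "x - \<iota> (e c) \<in> J"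
        by auto
      obtain N where N: "t = (\<Sum>i<N. \<iota> (ore_coeff \<iota> x t i) * x ^ i)"
        using ore_expansion_lessThan by metis
      define k where "k = ore_coeff \<iota> x t"
      have "(\<Sum>i<N. \<phi> (k i) * c ^ i) = 0"
        using t0 N ore_eval_monom_sum[OF pr rel, of "{..<N}" k] unfolding k_def by simp
      then have "(\<Sum>i<N. \<iota> (e (\<phi> (k i) * c ^ i))) = 0"
        by (simp add: rhom_sum[OF iota_rhom, symmetric] rhom_sum[OF e_rhom, symmetric]
            rhom_0[OF iota_rhom] rhom_0[OF e_rhom])
      then have "t = (\<Sum>i<N. \<iota> (k i) * x ^ i - \<iota> (e (\<phi> (k i) * c ^ i)))"
        unfolding sum_subtractf k_def N[symmetric] by simp
      also have "\<dots> \<in> J"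
        by (intro two_ideal_sum[OF J] ore_monomial_congruence[OF \<phi> J mT xc])
      finally show "t \<in> J" .
    qed
  qed
qed

lemma Xi_fibre_of_invariant_character:
  assumes \<phi>: "falg_hom e id \<phi>" and \<sigma>\<phi>: "\<And>r. \<phi> (\<sigma> r) = \<phi> r" and \<delta>\<phi>: "\<And>r. \<phi> (\<delta> r) = 0"
  shows "{M \<in> Xi (\<iota> \<circ> e). Psi \<iota> M = {a. \<phi> a = 0}} = range (\<lambda>c. {t. ore_eval \<iota> x \<phi> c t = 0})"
    and "inj (\<lambda>c. {t. ore_eval \<iota> x \<phi> c t = 0})"
proof -
  have pr: "rhom \<phi>" and pe: "\<And>c. \<phi> (e c) = c" using \<phi> unfolding falg_hom_def by auto
  have rel: "\<phi> (\<sigma> r) * c + \<phi> (\<delta> r) = c * \<phi> r" for r c by (simp add: \<sigma>\<phi> \<delta>\<phi> mult.commute)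
  show "{M \<in> Xi (\<iota> \<circ> e). Psi \<iota> M = {a. \<phi> a = 0}} = range (\<lambda>c. {t. ore_eval \<iota> x \<phi> c t = 0})"
  proof
    show "range (\<lambda>c. {t. ore_eval \<iota> x \<phi> c t = 0}) \<subseteq> {M \<in> Xi (\<iota> \<circ> e). Psi \<iota> M = {a. \<phi> a = 0}}"
      using ore_eval_character(2,3)[OF \<phi> rel] by blast
    show "{M \<in> Xi (\<iota> \<circ> e). Psi \<iota> M = {a. \<phi> a = 0}} \<subseteq> range (\<lambda>c. {t. ore_eval \<iota> x \<phi> c t = 0})"
    proof
      fix M assume "M \<in> {M \<in> Xi (\<iota> \<circ> e). Psi \<iota> M = {a. \<phi> a = 0}}"
      then obtain \<chi> where "M = {t. ore_eval \<iota> x \<phi> (\<chi> x) t = 0}"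
        using Xi_fibre_ore_eval[OF \<phi>] by blast
      then show "M \<in> range (\<lambda>c. {t. ore_eval \<iota> x \<phi> c t = 0})" by blast
    qed
  qed
  show "inj (\<lambda>c. {t. ore_eval \<iota> x \<phi> c t = 0})"
  proof (rule injI)
    fix c c' assume "{t. ore_eval \<iota> x \<phi> c t = 0} = {t. ore_eval \<iota> x \<phi> c' t = 0}"
    moreover have "ore_eval \<iota> x \<phi> c' (x - \<iota> (e c')) = 0"
      by (simp add: rhom_diff[OF ore_eval_rhom[OF pr rel]] ore_eval_x[OF pr rel] ore_eval_iota[OF pr rel] pe)
    ultimately have "ore_eval \<iota> x \<phi> c (x - \<iota> (e c')) = 0" by blast
    then show "c = c'"
      by (simp add: rhom_diff[OF ore_eval_rhom[OF pr rel]] ore_eval_x[OF pr rel] ore_eval_iota[OF pr rel] pe)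
  qed
qed

lemma Xi_fibre_invariant:
  assumes m: "m \<in> Xi e" and \<sigma>m: "\<sigma> ` m = m" and \<delta>m: "\<delta> ` m \<subseteq> m"
  shows "\<delta> ` commutators \<subseteq> m \<and>
        two_ideal (ext_ideal \<iota> m) \<and>
        (\<exists>\<Phi> :: 't \<Rightarrow> 'f poly. falg_hom (\<iota> \<circ> e) (\<lambda>c. [:c:]) \<Phi> \<and> surj \<Phi> \<and>
            ext_ideal \<iota> m = {t. \<Phi> t = 0}) \<and>
        {M \<in> Xi (\<iota> \<circ> e). Psi \<iota> M = m} =
          (\<lambda>c. ideal_gen (ext_ideal \<iota> m \<union> {x - \<iota> (e c)})) ` UNIV \<and>
        inj (\<lambda>c. ideal_gen (ext_ideal \<iota> m \<union> {x - \<iota> (e c)}))"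
proof -
  obtain \<phi> :: "'r \<Rightarrow> 'f" where \<phi>: "falg_hom e id \<phi>" and m_ker: "m = {a. \<phi> a = 0}"
    using m unfolding Xi_def by auto
  have \<sigma>\<phi>: "\<phi> (\<sigma> r) = \<phi> r" and \<delta>\<phi>: "\<phi> (\<delta> r) = 0" for r
    using ker_invariant_character[OF \<phi>] \<sigma>m \<delta>m unfolding m_ker by auto
  have a: "\<delta> ` commutators \<subseteq> m" using \<delta>\<phi> unfolding m_ker by auto
  obtain \<Phi> :: "'t \<Rightarrow> 'f poly"
    where \<Phi>: "falg_hom (\<iota> \<circ> e) (\<lambda>c. [:c:]) \<Phi>" "surj \<Phi>" "ext_ideal \<iota> m = {t. \<Phi> t = 0}"
    using ker_poly_eval_eq_ext_ideal[OF \<phi> \<sigma>\<phi> \<delta>\<phi>] unfolding m_ker by blast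
  have ideal: "two_ideal (ext_ideal \<iota> m)"
    unfolding \<Phi>(3) by (rule two_ideal_ker) (use \<Phi>(1) in \<open>simp add: falg_hom_def\<close>)
  have I_ker: "(\<lambda>c. ideal_gen (ext_ideal \<iota> m \<union> {x - \<iota> (e c)})) = (\<lambda>c. {t. ore_eval \<iota> x \<phi> c t = 0})"
    unfolding m_ker using ker_ore_eval_eq_ideal_gen[OF \<phi> \<sigma>\<phi> \<delta>\<phi>] by simp
  show ?thesis
    unfolding I_ker using a ideal \<Phi> Xi_fibre_of_invariant_character[OF \<phi> \<sigma>\<phi> \<delta>\<phi>]
    by (simp only: m_ker) blast
qed

end

theorem theorem4p2:
  fixes e :: "'f::field \<Rightarrow> 'r::ring_1"
    and \<sigma> \<delta> :: "'r \<Rightarrow> 'r"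
    and \<iota> :: "'r \<Rightarrow> 't::ring_1"
    and x :: 't
  assumes alg_closed: "\<forall>p :: 'f poly. degree p > 0 \<longrightarrow> (\<exists>z. poly p z = 0)"
    and F_alg: "falg e"
    and aut: "falg_aut e \<sigma>"
    and der: "sigma_derivation e \<sigma> \<delta>"
    and ore: "ore_extension \<sigma> \<delta> \<iota> x"
  shows
    "(\<forall>M \<in> Xi (\<iota> \<circ> e). Psi \<iota> M \<in> Xi e \<and>
        \<delta> ` commutators \<subseteq> Psi \<iota> M \<and>
        ((\<sigma> ` Psi \<iota> M = Psi \<iota> M \<and> \<delta> ` Psi \<iota> M \<subseteq> Psi \<iota> M) \<or> \<sigma> ` Psi \<iota> M \<noteq> Psi \<iota> M))
   \<and> (\<forall>m \<in> Xi e. \<sigma> ` m = m \<and> \<delta> ` m \<subseteq> m \<longrightarrow>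
        \<delta> ` commutators \<subseteq> m \<and>
        two_ideal (ext_ideal \<iota> m) \<and>
        (\<exists>\<phi> :: 't \<Rightarrow> 'f poly. falg_hom (\<iota> \<circ> e) (\<lambda>c. [:c:]) \<phi> \<and> surj \<phi> \<and>
            ext_ideal \<iota> m = {t. \<phi> t = 0}) \<and>
        {M \<in> Xi (\<iota> \<circ> e). Psi \<iota> M = m} =
          (\<lambda>c. ideal_gen (ext_ideal \<iota> m \<union> {x - \<iota> (e c)})) ` UNIV \<and>
        inj (\<lambda>c. ideal_gen (ext_ideal \<iota> m \<union> {x - \<iota> (e c)})))
   \<and> (\<forall>m \<in> Xi e. \<delta> ` commutators \<subseteq> m \<and> \<sigma> ` m \<noteq> m \<longrightarrow>
        (\<exists>!M. M \<in> Xi (\<iota> \<circ> e) \<and> Psi \<iota> M = m))"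
proof -
  interpret ore_falg \<sigma> \<delta> \<iota> x e
    by (intro ore_falg.intro ore_ext.intro ore_falg_axioms.intro) (use ore F_alg aut der in auto)
  show ?thesis
    by (intro conjI; intro ballI impI;
        rule Psi_Xi_conditions Xi_fibre_invariant Xi_fibre_unique; simp)
qed

end
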